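(* Let $(M,g)$ be a semi-Riemannian manifold of dimension $n\ge3$ which is Ricci generalized recurrent with 1-forms $(\overline\Pi,\overline\Phi)$, i.e. $\nabla S=\overline\Pi\otimes S+\overline\Phi\otimes g$, and super generalized recurrent with 1-forms $(\Pi,\Phi,\Psi,\Theta)$, i.e. $\nabla R = \Pi \otimes R + \Phi \otimes S\wedge S + \Psi \otimes g\wedge S + \Theta \otimes g\wedge g$. Then: (i) $M$ is $C$-$SGK_n$ with 1-forms $\left(\Pi,\ \Phi,\ \Psi-\frac{\overline\Pi-\Pi}{n-2},\ \Theta-\frac{\overline\Phi}{n-2}+\frac{\kappa\overline\Pi+n\overline\Phi-\kappa\Pi}{2(n-1)(n-2)}\right)$; (ii) $M$ is $W$-$SGK_n$ with 1-forms $\left(\Pi,\ \Phi,\ \Psi,\ \Theta-\frac{\kappa\overline\Pi+n\overline\Phi-\kappa\Pi}{2n(n-1)}\right)$; (iii) $M$ is $K$-$SGK_n$ with 1-forms $\left(\Pi,\ \Phi,\ \Psi-\frac{\overline\Pi-\Pi}{n-2},\ \Theta-\frac{\overline\Phi}{n-2}\right)$; (iv) if $\Pi=\overline\Pi$, then $M$ is $P$-$SGK_n$ with 1-forms $\left(\Pi,\ \Phi,\ \Psi,\ \Theta-\frac{\overline\Phi}{2(n-1)}\right)$.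
   Context: $(M,g)$ is connected with Levi-Civita connection $\nabla$, curvature $(0,4)$-tensor $R$, Ricci tensor $S$ and scalar curvature $\kappa$. For symmetric $(0,2)$-tensors $A,E$, $(A\wedge E)(X_1,X_2,Y_1,Y_2)=A(X_1,Y_2)E(X_2,Y_1)+A(X_2,Y_1)E(X_1,Y_2)-A(X_1,Y_1)E(X_2,Y_2)-A(X_2,Y_2)E(X_1,Y_1)$. $(\Pi\otimes T)(X,X_1,\dots)=\Pi(X)T(X_1,\dots)$, $(\nabla T)(X,X_1,\dots)=(\nabla_XT)(X_1,\dots)$. The conformal, concircular, conharmonic and projective curvature tensors are $C=R-\frac1{n-2}g\wedge S+\frac{\kappa}{2(n-1)(n-2)}g\wedge g$, $W=R-\frac{\kappa}{2n(n-1)}g\wedge g$, $K=R-\frac1{n-2}g\wedge S$, and $P(X_1,X_2,X_3,X_4)=R(X_1,X_2,X_3,X_4)-\frac1{n-1}\left[S(X_2,X_3)g(X_1,X_4)-S(X_1,X_3)g(X_2,X_4)\right]$. For a $(0,4)$-tensor $T$, $M$ is $T$-$SGK_n$ with 1-forms $(\Pi,\Phi,\Psi,\Theta)$ if $\nabla T=\Pi\otimes T+\Phi\otimes S\wedge S+\Psi\otimes g\wedge S+\Theta\otimes g\wedge g$ (on the set where $\nabla T-\xi\otimes T-\zeta\otimes S\wedge S-\theta\otimes g\wedge S\neq0$ for all 1-forms $\xi,\zeta,\theta$); $SGK_n$ means $R$-$SGK_n$. *)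

theory Defs
  imports "HOL-Analysis.Analysis"
begin

text \<open>Local-coordinate model of a semi-Riemannian manifold: an open connected
  coordinate domain U in R^n (index type 'n, n = CARD('n)) with metric components
  g x i j.\<close>

type_synonym 'n pt = "real^'n"
type_synonym 'n form1 = "'n pt \<Rightarrow> 'n \<Rightarrow> real"
type_synonym 'n tens2 = "'n pt \<Rightarrow> 'n \<Rightarrow> 'n \<Rightarrow> real"
type_synonym 'n tens4 = "'n pt \<Rightarrow> 'n \<Rightarrow> 'n \<Rightarrow> 'n \<Rightarrow> 'n \<Rightarrow> real"

definition pd :: "'n::finite \<Rightarrow> ('n pt \<Rightarrow> real) \<Rightarrow> 'n pt \<Rightarrow> real" where
  "pd i f x = frechet_derivative f (at x) (axis i 1)"

fun iter_pd :: "'n::finite list \<Rightarrow> ('n pt \<Rightarrow> real) \<Rightarrow> 'n pt \<Rightarrow> real" where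
  "iter_pd [] f = f"
| "iter_pd (i # is) f = pd i (iter_pd is f)"

definition smooth_on :: "'n::finite pt set \<Rightarrow> ('n pt \<Rightarrow> real) \<Rightarrow> bool" where
  "smooth_on U f \<longleftrightarrow> (\<forall>is. \<forall>x\<in>U. iter_pd is f differentiable (at x))"

definition gmat :: "'n::finite tens2 \<Rightarrow> 'n pt \<Rightarrow> real^'n^'n" where
  "gmat g x = (\<chi> i j. g x i j)"

definition ginv :: "'n::finite tens2 \<Rightarrow> 'n tens2" where
  "ginv g x i j = matrix_inv (gmat g x) $ i $ j"

definition semi_riemannian :: "'n::finite pt set \<Rightarrow> 'n tens2 \<Rightarrow> bool" where
  "semi_riemannian U g \<longleftrightarrow> open U \<and> connected U \<and> U \<noteq> {} \<and>
     (\<forall>i j. smooth_on U (\<lambda>x. g x i j)) \<and>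
     (\<forall>x\<in>U. \<forall>i j. g x i j = g x j i) \<and>
     (\<forall>x\<in>U. det (gmat g x) \<noteq> 0)"

definition christoffel :: "'n::finite tens2 \<Rightarrow> 'n pt \<Rightarrow> 'n \<Rightarrow> 'n \<Rightarrow> 'n \<Rightarrow> real" where
  "christoffel g x k i j = (1/2) * (\<Sum>l\<in>UNIV. ginv g x k l *
      (pd i (\<lambda>y. g y j l) x + pd j (\<lambda>y. g y i l) x - pd l (\<lambda>y. g y i j) x))"

text \<open>R(d_i,d_j)d_k = Rup l i j k d_l with R(X,Y) = [nabla_X,nabla_Y] - nabla_[X,Y].\<close>
definition Rup :: "'n::finite tens2 \<Rightarrow> 'n pt \<Rightarrow> 'n \<Rightarrow> 'n \<Rightarrow> 'n \<Rightarrow> 'n \<Rightarrow> real" where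
  "Rup g x l i j k = pd i (\<lambda>y. christoffel g y l j k) x - pd j (\<lambda>y. christoffel g y l i k) x
     + (\<Sum>m\<in>UNIV. christoffel g x l i m * christoffel g x m j k
                  - christoffel g x l j m * christoffel g x m i k)"

text \<open>Curvature (0,4)-tensor R(X1,X2,X3,X4) = g(R(X1,X2)X3, X4).\<close>
definition Riem :: "'n::finite tens2 \<Rightarrow> 'n tens4" where
  "Riem g x i j k h = (\<Sum>l\<in>UNIV. g x l h * Rup g x l i j k)"

definition Ric :: "'n::finite tens2 \<Rightarrow> 'n tens2" where
  "Ric g x j k = (\<Sum>i\<in>UNIV. Rup g x i i j k)"

definition scal :: "'n::finite tens2 \<Rightarrow> 'n pt \<Rightarrow> real" where
  "scal g x = (\<Sum>j\<in>UNIV. \<Sum>k\<in>UNIV. ginv g x j k * Ric g x j k)"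

definition kn :: "'n::finite tens2 \<Rightarrow> 'n tens2 \<Rightarrow> 'n tens4" where
  "kn A E x a b c d = A x a d * E x b c + A x b c * E x a d - A x a c * E x b d - A x b d * E x a c"

text \<open>Covariant derivatives (nabla T)(X, X1, ...) = (nabla_X T)(X1, ...).\<close>
definition cov2 :: "'n::finite tens2 \<Rightarrow> 'n tens2 \<Rightarrow> 'n pt \<Rightarrow> 'n \<Rightarrow> 'n \<Rightarrow> 'n \<Rightarrow> real" where
  "cov2 g A x i a b = pd i (\<lambda>y. A y a b) x
     - (\<Sum>m\<in>UNIV. christoffel g x m i a * A x m b + christoffel g x m i b * A x a m)"

definition cov4 :: "'n::finite tens2 \<Rightarrow> 'n tens4 \<Rightarrow> 'n pt \<Rightarrow> 'n \<Rightarrow> 'n \<Rightarrow> 'n \<Rightarrow> 'n \<Rightarrow> 'n \<Rightarrow> real" where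
  "cov4 g T x i a b c d = pd i (\<lambda>y. T y a b c d) x
     - (\<Sum>m\<in>UNIV. christoffel g x m i a * T x m b c d + christoffel g x m i b * T x a m c d
                + christoffel g x m i c * T x a b m d + christoffel g x m i d * T x a b c m)"

definition dimr :: "'n::finite itself \<Rightarrow> real" where
  "dimr _ = real CARD('n)"

definition conformal :: "'n::finite tens2 \<Rightarrow> 'n tens4" where
  "conformal g x a b c d = Riem g x a b c d - 1 / (dimr TYPE('n) - 2) * kn g (Ric g) x a b c d
     + scal g x / (2 * (dimr TYPE('n) - 1) * (dimr TYPE('n) - 2)) * kn g g x a b c d"

definition concircular :: "'n::finite tens2 \<Rightarrow> 'n tens4" where
  "concircular g x a b c d = Riem g x a b c d
     - scal g x / (2 * dimr TYPE('n) * (dimr TYPE('n) - 1)) * kn g g x a b c d"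

definition conharmonic :: "'n::finite tens2 \<Rightarrow> 'n tens4" where
  "conharmonic g x a b c d = Riem g x a b c d - 1 / (dimr TYPE('n) - 2) * kn g (Ric g) x a b c d"

definition projective :: "'n::finite tens2 \<Rightarrow> 'n tens4" where
  "projective g x a b c d = Riem g x a b c d
     - 1 / (dimr TYPE('n) - 1) * (Ric g x b c * g x a d - Ric g x a c * g x b d)"

definition ricci_gen_recurrent :: "'n::finite pt set \<Rightarrow> 'n tens2 \<Rightarrow> 'n form1 \<Rightarrow> 'n form1 \<Rightarrow> bool" where
  "ricci_gen_recurrent U g Pb Fb \<longleftrightarrow> (\<forall>x\<in>U. \<forall>i a b.
     cov2 g (Ric g) x i a b = Pb x i * Ric g x a b + Fb x i * g x a b)"

definition SGK :: "'n::finite pt set \<Rightarrow> 'n tens2 \<Rightarrow> 'n tens4 \<Rightarrow> 'n form1 \<Rightarrow> 'n form1 \<Rightarrow> 'n form1 \<Rightarrow> 'n form1 \<Rightarrow> bool" where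
  "SGK U g T Pi1 Phi1 Psi1 Theta1 \<longleftrightarrow> (\<forall>x\<in>U. \<forall>i a b c d.
     cov4 g T x i a b c d = Pi1 x i * T x a b c d + Phi1 x i * kn (Ric g) (Ric g) x a b c d
       + Psi1 x i * kn g (Ric g) x a b c d + Theta1 x i * kn g g x a b c d)"

end

theory Submission
  imports Defs
begin

text \<open>Each of the conformal, concircular and conharmonic tensors has the form
  R + c1 (g \<and> S) + c2 \<kappa> (g \<and> g) with constants c1, c2. Since the Levi-Civita connection is metric,
  \<nabla>(g \<and> g) = 0, and the Ricci recurrence \<nabla>S = \<Pi>' S + \<Phi>' g gives
  \<nabla>(g \<and> S) = \<Pi>' (g \<and> S) + \<Phi>' (g \<and> g); contracting \<nabla>S with the inverse metric gives
  d\<kappa> = \<Pi>' \<kappa> + n \<Phi>'. The Leibniz rule then expresses \<nabla>T through \<nabla>R, and regrouping the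
  coefficients of R, S \<and> S, g \<and> S and g \<and> g gives the stated 1-forms. The projective tensor is
  handled the same way with half of g \<and> S in place of g \<and> S, which is why \<Pi> = \<Pi>' is needed.\<close>

section \<open>Partial derivatives\<close>

lemma pd_has_derivative:
  assumes "(f has_derivative D) (at x)"
  shows "pd i f x = D (axis i 1)"
  using frechet_derivative_at[OF assms] unfolding pd_def by simp

lemma pd_cong_open:
  assumes "open U" "x \<in> U" "\<And>y. y \<in> U \<Longrightarrow> f y = h y"
  shows "pd i f x = pd i h x"
proof -
  have "(f has_derivative D) (at x) \<longleftrightarrow> (h has_derivative D) (at x)" for D
    using has_derivative_transform_within_open[where f=f and g=h, OF _ assms(1,2,3)]
      has_derivative_transform_within_open[where f=h and g=f, OF _ assms(1,2) assms(3)[symmetric]]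
    by blast
  then show ?thesis unfolding pd_def frechet_derivative_def by simp
qed

lemma differentiable_cong_open:
  assumes "open U" "x \<in> U" "f differentiable (at x)" "\<And>y. y \<in> U \<Longrightarrow> f y = h y"
  shows "h differentiable (at x)"
  using assms(3) has_derivative_transform_within_open[where f=f and g=h, OF _ assms(1,2,4)]
  unfolding differentiable_def by blast

lemma iter_pd_cong_open:
  assumes "open U" "\<And>y. y \<in> U \<Longrightarrow> f y = h y" "y \<in> U"
  shows "iter_pd is f y = iter_pd is h y"
  using assms(3)
proof (induction "is" arbitrary: y)
  case (Cons i js)
  have "pd i (iter_pd js f) y = pd i (iter_pd js h) y"
    using pd_cong_open[OF assms(1) Cons.prems Cons.IH] .
  then show ?case by simp
qed (simp add: assms(2))

lemma iter_pd_append_single: "iter_pd (is @ [i]) f = iter_pd is (pd i f)"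
  by (induction "is") simp_all

lemma pd_const: "pd i (\<lambda>y. c) x = 0"
  using pd_has_derivative[OF has_derivative_const] .

lemma pd_add:
  assumes "f differentiable (at x)" "h differentiable (at x)"
  shows "pd i (\<lambda>y. f y + h y) x = pd i f x + pd i h x"
  using pd_has_derivative[OF has_derivative_add[OF assms[unfolded frechet_derivative_works]]]
  unfolding pd_def .

lemma pd_diff:
  assumes "f differentiable (at x)" "h differentiable (at x)"
  shows "pd i (\<lambda>y. f y - h y) x = pd i f x - pd i h x"
  using pd_has_derivative[OF has_derivative_diff[OF assms[unfolded frechet_derivative_works]]]
  unfolding pd_def .

lemma pd_mult:
  assumes "f differentiable (at x)" "h differentiable (at x)"
  shows "pd i (\<lambda>y. f y * h y) x = pd i f x * h x + f x * pd i h x"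
  using pd_has_derivative[OF has_derivative_mult[OF assms[unfolded frechet_derivative_works]]]
  unfolding pd_def by simp

lemma pd_inverse:
  assumes "f differentiable (at x)" "f x \<noteq> 0"
  shows "pd i (\<lambda>y. inverse (f y)) x = - pd i f x * (inverse (f x) * inverse (f x))"
  using pd_has_derivative[OF Deriv.has_derivative_inverse[OF assms(2)
        assms(1)[unfolded frechet_derivative_works]]]
  unfolding pd_def by simp

lemma pd_cmult:
  assumes "f differentiable (at x)"
  shows "pd i (\<lambda>y. c * f y) x = c * pd i f x"
  using pd_has_derivative[OF has_derivative_mult_right[OF assms[unfolded frechet_derivative_works]]]
  unfolding pd_def .

lemma pd_sum:
  assumes "finite S" "\<And>k. k \<in> S \<Longrightarrow> f k differentiable (at x)"
  shows "pd i (\<lambda>y. \<Sum>k\<in>S. f k y) x = (\<Sum>k\<in>S. pd i (f k) x)"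
  using assms
proof (induction S rule: finite_induct)
  case empty
  then show ?case by (simp add: pd_const)
next
  case (insert a F)
  have "(\<lambda>y. \<Sum>k\<in>F. f k y) differentiable (at x)"
    using insert by (intro differentiable_sum) auto
  then show ?case using insert by (simp add: pd_add)
qed

section \<open>Smooth functions on open sets\<close>

text \<open>Bounding the derivative order lets the closure properties of smooth_on be proved by
  induction on N.\<close>
definition smooth_upto :: "nat \<Rightarrow> 'n::finite pt set \<Rightarrow> ('n pt \<Rightarrow> real) \<Rightarrow> bool" where
  "smooth_upto N U f \<longleftrightarrow> (\<forall>is. length is \<le> N \<longrightarrow> (\<forall>x\<in>U. iter_pd is f differentiable (at x)))"

lemma smooth_on_iff_smooth_upto: "smooth_on U f \<longleftrightarrow> (\<forall>N. smooth_upto N U f)"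
  unfolding smooth_on_def smooth_upto_def by (meson order_refl)

lemma smooth_upto_mono: "smooth_upto N U f \<Longrightarrow> M \<le> N \<Longrightarrow> smooth_upto M U f"
  unfolding smooth_upto_def by auto

lemma smooth_upto_0: "smooth_upto 0 U f \<longleftrightarrow> (\<forall>x\<in>U. f differentiable (at x))"
  unfolding smooth_upto_def by simp

lemma smooth_upto_differentiable: "smooth_upto N U f \<Longrightarrow> x \<in> U \<Longrightarrow> f differentiable (at x)"
  using smooth_upto_0 smooth_upto_mono by blast

lemma smooth_upto_pd: "smooth_upto (Suc N) U f \<Longrightarrow> smooth_upto N U (pd i f)"
  unfolding smooth_upto_def
  by (metis iter_pd_append_single length_append_singleton not_less_eq_eq)

lemma smooth_upto_cong_open:
  assumes "open U" "smooth_upto N U f" "\<And>y. y \<in> U \<Longrightarrow> f y = h y"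
  shows "smooth_upto N U h"
  unfolding smooth_upto_def
proof (intro allI impI ballI)
  fix "is" :: "'a list" and x assume "length is \<le> N" "x \<in> U"
  then have "iter_pd is f differentiable (at x)" using assms(2) unfolding smooth_upto_def by blast
  then show "iter_pd is h differentiable (at x)"
    using differentiable_cong_open[OF assms(1) \<open>x \<in> U\<close>]
      iter_pd_cong_open[where f = f and h = h, OF assms(1,3)] by blast
qed

lemma smooth_upto_SucI:
  assumes "open U" "\<And>x. x \<in> U \<Longrightarrow> f differentiable (at x)"
    and "\<And>i. smooth_upto N U (h i)" "\<And>i y. y \<in> U \<Longrightarrow> pd i f y = h i y"
  shows "smooth_upto (Suc N) U f"
  unfolding smooth_upto_def
proof (intro allI impI ballI)
  fix "is" :: "'a list" and x assume l: "length is \<le> Suc N" and x: "x \<in> U"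
  show "iter_pd is f differentiable (at x)"
  proof (cases "is" rule: rev_exhaust)
    case Nil
    then show ?thesis using assms(2) x by simp
  next
    case (snoc js i)
    have "smooth_upto N U (pd i f)"
      using smooth_upto_cong_open[OF assms(1,3)] assms(4) by metis
    then show ?thesis using snoc l x unfolding smooth_upto_def by (simp add: iter_pd_append_single)
  qed
qed

lemma smooth_upto_const: "open U \<Longrightarrow> smooth_upto N U (\<lambda>y. c)"
proof (induction N arbitrary: c)
  case 0
  then show ?case by (simp add: smooth_upto_0)
next
  case (Suc N)
  then show ?case by (intro smooth_upto_SucI[where h = "\<lambda>i y. 0"]) (simp_all add: pd_const)
qed

lemma smooth_upto_add:
  "open U \<Longrightarrow> smooth_upto N U f \<Longrightarrow> smooth_upto N U h \<Longrightarrow> smooth_upto N U (\<lambda>y. f y + h y)"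
proof (induction N arbitrary: f h)
  case 0
  then show ?case by (simp add: smooth_upto_0)
next
  case (Suc N)
  show ?case
  proof (rule smooth_upto_SucI[where h = "\<lambda>i y. pd i f y + pd i h y"])
    show "smooth_upto N U (\<lambda>y. pd i f y + pd i h y)" for i
      using Suc by (simp add: smooth_upto_pd)
    show "pd i (\<lambda>y. f y + h y) y = pd i f y + pd i h y" if "y \<in> U" for i y
      using Suc.prems that by (simp add: pd_add smooth_upto_differentiable)
  qed (use Suc.prems in \<open>simp_all add: smooth_upto_differentiable\<close>)
qed

lemma smooth_upto_mult:
  "open U \<Longrightarrow> smooth_upto N U f \<Longrightarrow> smooth_upto N U h \<Longrightarrow> smooth_upto N U (\<lambda>y. f y * h y)"
proof (induction N arbitrary: f h)
  case 0
  then show ?case by (simp add: smooth_upto_0)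
next
  case (Suc N)
  have lower: "smooth_upto N U f" "smooth_upto N U h"
    using Suc.prems smooth_upto_mono by (metis le_SucI order_refl)+
  show ?case
  proof (rule smooth_upto_SucI[where h = "\<lambda>i y. pd i f y * h y + f y * pd i h y"])
    show "smooth_upto N U (\<lambda>y. pd i f y * h y + f y * pd i h y)" for i
      using Suc lower by (simp add: smooth_upto_add smooth_upto_pd)
    show "pd i (\<lambda>y. f y * h y) y = pd i f y * h y + f y * pd i h y" if "y \<in> U" for i y
      using Suc.prems that by (simp add: pd_mult smooth_upto_differentiable)
  qed (use Suc.prems in \<open>simp_all add: smooth_upto_differentiable\<close>)
qed

lemma smooth_upto_uminus:
  assumes "open U" "smooth_upto N U f"
  shows "smooth_upto N U (\<lambda>y. - f y)"
proof -
  have "smooth_upto N U (\<lambda>y. - 1 * f y)"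
    using assms by (intro smooth_upto_mult smooth_upto_const)
  then show ?thesis by simp
qed

lemma smooth_upto_inverse:
  "open U \<Longrightarrow> smooth_upto N U f \<Longrightarrow> (\<And>y. y \<in> U \<Longrightarrow> f y \<noteq> 0) \<Longrightarrow>
    smooth_upto N U (\<lambda>y. inverse (f y))"
proof (induction N arbitrary: f)
  case 0
  then show ?case by (simp add: smooth_upto_0 differentiable_inverse)
next
  case (Suc N)
  have "smooth_upto N U f"
    using Suc.prems smooth_upto_mono by (metis le_SucI order_refl)
  then have inv: "smooth_upto N U (\<lambda>y. inverse (f y))"
    using Suc by blast
  show ?case
  proof (rule smooth_upto_SucI[where h = "\<lambda>i y. - pd i f y * (inverse (f y) * inverse (f y))"])
    show "smooth_upto N U (\<lambda>y. - pd i f y * (inverse (f y) * inverse (f y)))" for i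
      using Suc.prems inv by (intro smooth_upto_mult smooth_upto_uminus smooth_upto_pd)
    show "pd i (\<lambda>y. inverse (f y)) y = - pd i f y * (inverse (f y) * inverse (f y))"
      if "y \<in> U" for i y
      using Suc.prems that by (simp add: pd_inverse smooth_upto_differentiable)
  qed (use Suc.prems in \<open>simp_all add: smooth_upto_differentiable differentiable_inverse\<close>)
qed

context
  fixes U :: "'n::finite pt set"
  assumes open_U: "open U"
begin

lemma smooth_on_const: "smooth_on U (\<lambda>y. c)"
  unfolding smooth_on_iff_smooth_upto using smooth_upto_const[OF open_U] by blast

lemma smooth_on_add: "smooth_on U f \<Longrightarrow> smooth_on U h \<Longrightarrow> smooth_on U (\<lambda>y. f y + h y)"
  unfolding smooth_on_iff_smooth_upto using smooth_upto_add[OF open_U] by blast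

lemma smooth_on_mult: "smooth_on U f \<Longrightarrow> smooth_on U h \<Longrightarrow> smooth_on U (\<lambda>y. f y * h y)"
  unfolding smooth_on_iff_smooth_upto using smooth_upto_mult[OF open_U] by blast

lemma smooth_on_uminus: "smooth_on U f \<Longrightarrow> smooth_on U (\<lambda>y. - f y)"
  unfolding smooth_on_iff_smooth_upto using smooth_upto_uminus[OF open_U] by blast

lemma smooth_on_diff: "smooth_on U f \<Longrightarrow> smooth_on U h \<Longrightarrow> smooth_on U (\<lambda>y. f y - h y)"
  using smooth_on_add[OF _ smooth_on_uminus] by simp

lemma smooth_on_inverse:
  "smooth_on U f \<Longrightarrow> (\<And>y. y \<in> U \<Longrightarrow> f y \<noteq> 0) \<Longrightarrow> smooth_on U (\<lambda>y. inverse (f y))"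
  unfolding smooth_on_iff_smooth_upto using smooth_upto_inverse[OF open_U] by blast

lemma smooth_on_divide:
  "smooth_on U f \<Longrightarrow> smooth_on U h \<Longrightarrow> (\<And>y. y \<in> U \<Longrightarrow> h y \<noteq> 0) \<Longrightarrow>
    smooth_on U (\<lambda>y. f y / h y)"
  using smooth_on_mult[OF _ smooth_on_inverse] by (simp add: divide_inverse)

lemma smooth_on_pd: "smooth_on U f \<Longrightarrow> smooth_on U (\<lambda>y. pd i f y)"
  unfolding smooth_on_iff_smooth_upto using smooth_upto_pd by blast

lemma smooth_on_differentiable: "smooth_on U f \<Longrightarrow> x \<in> U \<Longrightarrow> f differentiable (at x)"
  unfolding smooth_on_iff_smooth_upto using smooth_upto_differentiable by blast

lemma smooth_on_cong: "smooth_on U f \<Longrightarrow> (\<And>y. y \<in> U \<Longrightarrow> f y = h y) \<Longrightarrow> smooth_on U h"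
  unfolding smooth_on_iff_smooth_upto using smooth_upto_cong_open[OF open_U] by blast

lemma smooth_on_sum:
  "finite S \<Longrightarrow> (\<And>k. k \<in> S \<Longrightarrow> smooth_on U (f k)) \<Longrightarrow> smooth_on U (\<lambda>y. \<Sum>k\<in>S. f k y)"
  by (induction S rule: finite_induct) (simp_all add: smooth_on_const smooth_on_add)

lemma smooth_on_prod:
  "finite S \<Longrightarrow> (\<And>k. k \<in> S \<Longrightarrow> smooth_on U (f k)) \<Longrightarrow> smooth_on U (\<lambda>y. \<Prod>k\<in>S. f k y)"
  by (induction S rule: finite_induct) (simp_all add: smooth_on_const smooth_on_mult)

lemma smooth_on_det:
  assumes "\<And>a b. smooth_on U (\<lambda>y. F y a b)"
  shows "smooth_on U (\<lambda>y. det (\<chi> a b. F y a b :: real^'m::finite^'m))"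
  unfolding det_def
  by (intro smooth_on_sum smooth_on_mult smooth_on_const smooth_on_prod)
    (simp_all add: finite_permutations assms)

end

lemma matrix_inv_right_left:
  fixes A :: "real^'n::finite^'n"
  assumes "det A \<noteq> 0"
  shows matrix_inv_right: "A ** matrix_inv A = mat 1"
    and matrix_inv_left: "matrix_inv A ** A = mat 1"
proof -
  have "\<exists>A'. A ** A' = mat 1 \<and> A' ** A = mat 1"
    using assms invertible_det_nz unfolding invertible_def by blast
  then have "A ** matrix_inv A = mat 1 \<and> matrix_inv A ** A = mat 1"
    unfolding matrix_inv_def by (rule someI_ex)
  then show "A ** matrix_inv A = mat 1" "matrix_inv A ** A = mat 1" by auto
qed

lemma matrix_inv_cramer:
  fixes A :: "real^'n::finite^'n"
  assumes "det A \<noteq> 0"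
  shows "matrix_inv A $ k $ j = det (\<chi> a l. if l = k then (if a = j then 1 else 0) else A $ a $ l) / det A"
proof -
  let ?x = "\<chi> k. matrix_inv A $ k $ j"
  let ?b = "\<chi> a. if a = j then 1 else (0::real)"
  have "A *v ?x = ?b"
    using matrix_inv_right[OF assms]
    by (simp add: vec_eq_iff matrix_vector_mult_def matrix_matrix_mult_def mat_def)
  then show ?thesis
    using cramer[OF assms, of ?x ?b] by (simp add: vec_eq_iff cong: if_cong)
qed

lemma matrix_add_rdistrib: "((A::real^'n^'m) + B) ** C = A ** C + B ** C"
  by (simp add: matrix_matrix_mult_def vec_eq_iff sum.distrib ring_distribs)

lemma matrix_diff_ldistrib: "(A::real^'n^'m) ** (B - C) = A ** B - A ** C"
  by (simp add: matrix_matrix_mult_def vec_eq_iff sum_subtractf ring_distribs)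

lemma transpose_diff: "transpose ((A::real^'n^'m) - B) = transpose A - transpose B"
  by (simp add: transpose_def vec_eq_iff)

text \<open>Matrix form of the product rule for the contraction tr(H S^T) = H^jk S_jk. In the application
  G is the metric, H its inverse, Gam the Christoffel matrix of one coordinate direction (so the
  hypothesis on dG is metric compatibility), dH the derivative of H and N the covariant derivative
  of S.\<close>
lemma trace_contraction_derivative:
  fixes G H Gam dG dH S dS N :: "real^'n::finite^'n"
  assumes GH: "G ** H = mat 1" and HG: "H ** G = mat 1"
    and dG: "dG = transpose Gam ** G + G ** Gam"
    and dH: "dH ** G + H ** dG = 0"
    and N: "N = dS - transpose Gam ** S - S ** Gam"
  shows "trace (dH ** transpose S) + trace (H ** transpose dS) = trace (H ** transpose N)"
proof -
  let ?X = "H ** transpose S"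
  have "(dH ** G) ** ?X = dH ** ((G ** H) ** transpose S)"
    by (simp only: matrix_mul_assoc)
  then have "dH ** transpose S = (dH ** G) ** ?X"
    by (simp add: GH)
  then have "trace (dH ** transpose S) + trace ((H ** dG) ** ?X) = trace ((dH ** G + H ** dG) ** ?X)"
    by (simp add: matrix_add_rdistrib trace_add)
  moreover have "trace (0 ** ?X) = 0"
    by (simp add: trace_def)
  ultimately have dH_term: "trace (dH ** transpose S) = - trace ((H ** dG) ** ?X)"
    by (simp add: dH)
  have "(H ** dG) ** ?X = (H ** transpose Gam) ** (G ** H) ** transpose S + (H ** G) ** Gam ** ?X"
    unfolding dG matrix_add_ldistrib matrix_add_rdistrib by (simp add: matrix_mul_assoc)
  then have "(H ** dG) ** ?X = H ** transpose Gam ** transpose S + Gam ** ?X"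
    by (simp add: GH HG)
  then have "trace ((H ** dG) ** ?X) = trace (H ** transpose Gam ** transpose S) + trace (?X ** Gam)"
    by (simp add: trace_add trace_mul_sym[of Gam])
  moreover have "H ** transpose N = H ** transpose dS - ?X ** Gam - H ** transpose Gam ** transpose S"
    unfolding N transpose_diff matrix_transpose_mul matrix_diff_ldistrib by (simp add: matrix_mul_assoc)
  ultimately show ?thesis
    using dH_term by (simp add: trace_sub)
qed

section \<open>The Levi-Civita connection in a coordinate domain\<close>

definition christoffel_mat :: "'n::finite tens2 \<Rightarrow> 'n pt \<Rightarrow> 'n \<Rightarrow> real^'n^'n" where
  "christoffel_mat g x i = (\<chi> m a. christoffel g x m i a)"

definition pd_mat :: "'n::finite \<Rightarrow> 'n tens2 \<Rightarrow> 'n pt \<Rightarrow> real^'n^'n" where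
  "pd_mat i A x = (\<chi> a b. pd i (\<lambda>y. A y a b) x)"

lemma gmat_ginv: "gmat (ginv g) x = matrix_inv (gmat g x)"
  by (simp add: gmat_def ginv_def vec_eq_iff)

lemma trace_mult_transpose: "trace (A ** transpose B) = (\<Sum>j\<in>UNIV. \<Sum>k\<in>UNIV. A $ j $ k * B $ j $ k)"
  by (simp add: trace_def matrix_matrix_mult_def transpose_def)

lemma cov2_mat:
  "(\<chi> a b. cov2 g A x i a b) = pd_mat i A x
     - transpose (christoffel_mat g x i) ** gmat A x - gmat A x ** christoffel_mat g x i"
  by (simp add: vec_eq_iff cov2_def pd_mat_def christoffel_mat_def gmat_def matrix_matrix_mult_def
      transpose_def sum.distrib mult.commute algebra_simps)

lemma pd_contraction:
  assumes "\<And>j k. (\<lambda>y. A y j k) differentiable (at x)" "\<And>j k. (\<lambda>y. B y j k) differentiable (at x)"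
  shows "pd i (\<lambda>y. \<Sum>j\<in>UNIV. \<Sum>k\<in>UNIV. A y j k * B y j k) x
    = trace (pd_mat i A x ** transpose (gmat B x)) + trace (gmat A x ** transpose (pd_mat i B x))"
proof -
  have "pd i (\<lambda>y. \<Sum>j\<in>UNIV. \<Sum>k\<in>UNIV. A y j k * B y j k) x
      = (\<Sum>j\<in>UNIV. \<Sum>k\<in>UNIV. pd i (\<lambda>y. A y j k * B y j k) x)"
    using assms by (simp add: pd_sum differentiable_sum)
  also have "\<dots> = (\<Sum>j\<in>UNIV. \<Sum>k\<in>UNIV. pd i (\<lambda>y. A y j k) x * B x j k + A x j k * pd i (\<lambda>y. B y j k) x)"
    using assms by (simp add: pd_mult)
  finally show ?thesis
    by (simp add: trace_mult_transpose pd_mat_def gmat_def sum.distrib)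
qed

locale semi_riemannian_domain =
  fixes U :: "'n::finite pt set" and g :: "'n tens2"
  assumes semi_riemannian: "semi_riemannian U g"
begin

lemma open_domain: "open U"
  using semi_riemannian unfolding semi_riemannian_def by blast

lemma metric_smooth: "smooth_on U (\<lambda>y. g y i j)"
  using semi_riemannian unfolding semi_riemannian_def by blast

lemma metric_sym: "y \<in> U \<Longrightarrow> g y i j = g y j i"
  using semi_riemannian unfolding semi_riemannian_def by blast

lemma det_metric_nonzero: "y \<in> U \<Longrightarrow> det (gmat g y) \<noteq> 0"
  using semi_riemannian unfolding semi_riemannian_def by blast

lemma inverse_metric_smooth: "smooth_on U (\<lambda>y. ginv g y k j)"
proof (rule smooth_on_cong[OF open_domain])
  show "smooth_on U (\<lambda>y. det (\<chi> a l. if l = k then (if a = j then 1 else 0) else g y a l)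
      / det (\<chi> a l. g y a l))"
  proof (intro smooth_on_divide smooth_on_det open_domain)
    show "smooth_on U (\<lambda>y. if l = k then (if a = j then 1 else 0) else g y a l)" for a l
      by (cases "l = k") (simp_all add: metric_smooth smooth_on_const[OF open_domain])
  qed (use det_metric_nonzero in \<open>simp_all add: metric_smooth gmat_def\<close>)
  show "det (\<chi> a l. if l = k then (if a = j then 1 else 0) else g y a l) / det (\<chi> a l. g y a l)
      = ginv g y k j" if "y \<in> U" for y
    using matrix_inv_cramer[OF det_metric_nonzero[OF that], of k j]
    by (simp add: ginv_def gmat_def cong: if_cong)
qed

lemmas smooth_on_intros = smooth_on_add[OF open_domain] smooth_on_diff[OF open_domain]
  smooth_on_mult[OF open_domain] smooth_on_sum[OF open_domain finite_class.finite_UNIV]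
  smooth_on_pd[OF open_domain] smooth_on_const[OF open_domain]

lemma christoffel_smooth: "smooth_on U (\<lambda>y. christoffel g y k i j)"
  unfolding christoffel_def by (intro smooth_on_intros inverse_metric_smooth metric_smooth)

lemma Rup_smooth: "smooth_on U (\<lambda>y. Rup g y l i j k)"
  unfolding Rup_def by (intro smooth_on_intros christoffel_smooth)

lemma Riem_smooth: "smooth_on U (\<lambda>y. Riem g y i j k h)"
  unfolding Riem_def by (intro smooth_on_intros Rup_smooth metric_smooth)

lemma Ric_smooth: "smooth_on U (\<lambda>y. Ric g y j k)"
  unfolding Ric_def by (intro smooth_on_intros Rup_smooth)

lemma scal_smooth: "smooth_on U (scal g)"
  unfolding scal_def[abs_def] by (intro smooth_on_intros Ric_smooth inverse_metric_smooth)

lemmas metric_differentiable = smooth_on_differentiable[OF open_domain metric_smooth]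
  and inverse_metric_differentiable = smooth_on_differentiable[OF open_domain inverse_metric_smooth]
  and Riem_differentiable = smooth_on_differentiable[OF open_domain Riem_smooth]
  and Ric_differentiable = smooth_on_differentiable[OF open_domain Ric_smooth]
  and scal_differentiable = smooth_on_differentiable[OF open_domain scal_smooth]

lemma inverse_metric_mult_metric:
  "y \<in> U \<Longrightarrow> (\<Sum>m\<in>UNIV. ginv g y j m * g y m k) = (if j = k then 1 else 0)"
  using matrix_inv_left[OF det_metric_nonzero, of y]
  by (simp add: vec_eq_iff matrix_matrix_mult_def ginv_def gmat_def mat_def)

lemma metric_mult_inverse_metric:
  "y \<in> U \<Longrightarrow> (\<Sum>m\<in>UNIV. g y j m * ginv g y m k) = (if j = k then 1 else 0)"
  using matrix_inv_right[OF det_metric_nonzero, of y]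
  by (simp add: vec_eq_iff matrix_matrix_mult_def ginv_def gmat_def mat_def)

lemma metric_mult_christoffel:
  assumes "x \<in> U"
  shows "(\<Sum>m\<in>UNIV. g x p m * christoffel g x m i q)
    = 1/2 * (pd i (\<lambda>y. g y q p) x + pd q (\<lambda>y. g y i p) x - pd p (\<lambda>y. g y i q) x)"
proof -
  define D where "D l = pd i (\<lambda>y. g y q l) x + pd q (\<lambda>y. g y i l) x - pd l (\<lambda>y. g y i q) x" for l
  have "(\<Sum>m\<in>UNIV. g x p m * christoffel g x m i q)
      = 1/2 * (\<Sum>m\<in>UNIV. \<Sum>l\<in>UNIV. g x p m * ginv g x m l * D l)"
    unfolding christoffel_def D_def by (simp add: sum_distrib_left mult_ac)
  also have "\<dots> = 1/2 * (\<Sum>l\<in>UNIV. (\<Sum>m\<in>UNIV. g x p m * ginv g x m l) * D l)"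
    by (subst sum.swap) (simp add: sum_distrib_right)
  also have "\<dots> = 1/2 * D p"
    by (simp add: metric_mult_inverse_metric[OF assms] if_distrib[of "\<lambda>c. c * _"] cong: if_cong)
  finally show ?thesis
    unfolding D_def .
qed

lemma levi_civita_metric_compatible:
  assumes "x \<in> U"
  shows "pd i (\<lambda>y. g y a b) x
    = (\<Sum>m\<in>UNIV. christoffel g x m i a * g x m b + christoffel g x m i b * g x a m)"
proof -
  have "pd i (\<lambda>y. g y b a) x = pd i (\<lambda>y. g y a b) x"
    by (intro pd_cong_open[OF open_domain assms] metric_sym)
  then have "pd i (\<lambda>y. g y a b) x
      = (\<Sum>m\<in>UNIV. g x b m * christoffel g x m i a) + (\<Sum>m\<in>UNIV. g x a m * christoffel g x m i b)"
    unfolding metric_mult_christoffel[OF assms] by (simp add: field_simps)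
  then show ?thesis
    by (simp add: sum.distrib metric_sym[OF assms, of _ b] mult.commute)
qed

lemma cov2_metric: "x \<in> U \<Longrightarrow> cov2 g g x i a b = 0"
  unfolding cov2_def using levi_civita_metric_compatible by simp

lemma pd_metric_mat:
  "x \<in> U \<Longrightarrow>
    pd_mat i g x = transpose (christoffel_mat g x i) ** gmat g x + gmat g x ** christoffel_mat g x i"
  by (simp add: vec_eq_iff levi_civita_metric_compatible pd_mat_def christoffel_mat_def gmat_def
      matrix_matrix_mult_def transpose_def sum.distrib mult.commute)

lemma pd_inverse_metric_mat:
  assumes "x \<in> U"
  shows "pd_mat i (ginv g) x ** gmat g x + matrix_inv (gmat g x) ** pd_mat i g x = 0"
proof -
  have "pd i (\<lambda>y. \<Sum>m\<in>UNIV. ginv g y j m * g y m k) x = pd i (\<lambda>y. if j = k then 1 else 0) x" for j k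
    by (intro pd_cong_open[OF open_domain assms] inverse_metric_mult_metric)
  then have "(\<Sum>m\<in>UNIV. pd i (\<lambda>y. ginv g y j m) x * g x m k + ginv g x j m * pd i (\<lambda>y. g y m k) x) = 0"
    for j k
    using assms
    by (simp add: pd_sum pd_mult pd_const inverse_metric_differentiable metric_differentiable)
  then show ?thesis
    by (simp add: vec_eq_iff matrix_matrix_mult_def pd_mat_def gmat_def ginv_def sum.distrib)
qed

text \<open>Since the metric is parallel, differentiating the contraction g^jk S_jk amounts to
  contracting the covariant derivative of S.\<close>
lemma pd_scal_eq_contraction_cov2:
  assumes "x \<in> U"
  shows "pd i (scal g) x = trace (matrix_inv (gmat g x) ** transpose (\<chi> a b. cov2 g (Ric g) x i a b))"
proof -
  have "pd i (scal g) x = trace (pd_mat i (ginv g) x ** transpose (gmat (Ric g) x))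
      + trace (matrix_inv (gmat g x) ** transpose (pd_mat i (Ric g) x))"
    unfolding scal_def[abs_def] gmat_ginv[symmetric]
    using assms by (intro pd_contraction inverse_metric_differentiable Ric_differentiable)
  also have "\<dots> = trace (matrix_inv (gmat g x) ** transpose (\<chi> a b. cov2 g (Ric g) x i a b))"
    by (rule trace_contraction_derivative[OF matrix_inv_right matrix_inv_left pd_metric_mat
          pd_inverse_metric_mat cov2_mat]) (use assms det_metric_nonzero in auto)
  finally show ?thesis .
qed

lemma pd_scal_recurrent:
  assumes "ricci_gen_recurrent U g Pb Fb" "x \<in> U"
  shows "pd i (scal g) x = Pb x i * scal g x + real CARD('n) * Fb x i"
proof -
  have trace_one: "(\<Sum>k\<in>UNIV. ginv g x j k * g x j k) = 1" for j
    using inverse_metric_mult_metric[OF assms(2), of j j] metric_sym[OF assms(2)] by simp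
  have "pd i (scal g) x
      = (\<Sum>j\<in>UNIV. \<Sum>k\<in>UNIV. ginv g x j k * (Pb x i * Ric g x j k + Fb x i * g x j k))"
    using assms unfolding pd_scal_eq_contraction_cov2[OF assms(2)] ricci_gen_recurrent_def
    by (simp add: trace_mult_transpose ginv_def)
  also have "\<dots> = Pb x i * scal g x + Fb x i * (\<Sum>j\<in>UNIV. \<Sum>k\<in>UNIV. ginv g x j k * g x j k)"
    by (simp add: scal_def ring_distribs sum.distrib sum_distrib_left mult_ac)
  finally show ?thesis
    by (simp add: trace_one)
qed

end

section \<open>Covariant derivatives of Kulkarni-Nomizu products\<close>

text \<open>kn A E = half_kn A E + half_kn E A, and the projective curvature tensor is
  R - half_kn S g / (n - 1).\<close>
definition half_kn :: "'n::finite tens2 \<Rightarrow> 'n tens2 \<Rightarrow> 'n tens4" where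
  "half_kn A E x a b c d = A x b c * E x a d - A x a c * E x b d"

lemma half_kn_self: "half_kn A A x a b c d = kn A A x a b c d / 2"
  by (simp add: kn_def half_kn_def)

lemma kn_differentiable:
  assumes "\<And>a b. (\<lambda>y. A y a b) differentiable (at x)" "\<And>a b. (\<lambda>y. E y a b) differentiable (at x)"
  shows "(\<lambda>y. kn A E y a b c d) differentiable (at x)"
  unfolding kn_def using assms by simp

lemma half_kn_differentiable:
  assumes "\<And>a b. (\<lambda>y. A y a b) differentiable (at x)" "\<And>a b. (\<lambda>y. E y a b) differentiable (at x)"
  shows "(\<lambda>y. half_kn A E y a b c d) differentiable (at x)"
  unfolding half_kn_def using assms by simp

lemma cov4_add_mult:
  assumes "\<And>a b c d. (\<lambda>y. T y a b c d) differentiable (at x)"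
    and "\<And>a b c d. (\<lambda>y. T' y a b c d) differentiable (at x)"
    and "f differentiable (at x)"
  shows "cov4 g (\<lambda>y a b c d. T y a b c d + f y * T' y a b c d) x i a b c d
    = cov4 g T x i a b c d + pd i f x * T' x a b c d + f x * cov4 g T' x i a b c d"
  using assms
  by (simp add: cov4_def pd_add pd_mult algebra_simps sum.distrib sum_subtractf sum_distrib_left)

lemma cov4_kn:
  assumes "\<And>a b. (\<lambda>y. A y a b) differentiable (at x)" "\<And>a b. (\<lambda>y. E y a b) differentiable (at x)"
  shows "cov4 g (kn A E) x i a b c d =
      (cov2 g A x i a d * E x b c + A x a d * cov2 g E x i b c)
    + (cov2 g A x i b c * E x a d + A x b c * cov2 g E x i a d)
    - (cov2 g A x i a c * E x b d + A x a c * cov2 g E x i b d)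
    - (cov2 g A x i b d * E x a c + A x b d * cov2 g E x i a c)"
  using assms
  by (simp add: cov4_def cov2_def kn_def pd_add pd_diff pd_mult algebra_simps
      sum.distrib sum_subtractf sum_distrib_left sum_distrib_right)

lemma cov4_half_kn:
  assumes "\<And>a b. (\<lambda>y. A y a b) differentiable (at x)" "\<And>a b. (\<lambda>y. E y a b) differentiable (at x)"
  shows "cov4 g (half_kn A E) x i a b c d =
      (cov2 g A x i b c * E x a d + A x b c * cov2 g E x i a d)
    - (cov2 g A x i a c * E x b d + A x a c * cov2 g E x i b d)"
  using assms
  by (simp add: cov4_def cov2_def half_kn_def pd_diff pd_mult algebra_simps
      sum.distrib sum_subtractf sum_distrib_left sum_distrib_right)

context semi_riemannian_domain
begin

lemma cov4_kn_metric_metric: "x \<in> U \<Longrightarrow> cov4 g (kn g g) x i a b c d = 0"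
  by (simp add: cov4_kn metric_differentiable cov2_metric)

context
  fixes Pb Fb :: "'n form1"
  assumes ricci_recurrent: "ricci_gen_recurrent U g Pb Fb"
begin

lemma cov2_Ric: "x \<in> U \<Longrightarrow> cov2 g (Ric g) x i a b = Pb x i * Ric g x a b + Fb x i * g x a b"
  using ricci_recurrent unfolding ricci_gen_recurrent_def by blast

lemma cov4_kn_metric_Ric:
  "x \<in> U \<Longrightarrow> cov4 g (kn g (Ric g)) x i a b c d
    = Pb x i * kn g (Ric g) x a b c d + Fb x i * kn g g x a b c d"
  by (simp add: cov4_kn metric_differentiable Ric_differentiable cov2_metric cov2_Ric kn_def
      algebra_simps)

lemma cov4_half_kn_Ric_metric:
  "x \<in> U \<Longrightarrow> cov4 g (half_kn (Ric g) g) x i a b c d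
    = Pb x i * half_kn (Ric g) g x a b c d + Fb x i * half_kn g g x a b c d"
  by (simp add: cov4_half_kn metric_differentiable Ric_differentiable cov2_metric cov2_Ric half_kn_def
      algebra_simps)

end

end

section \<open>Super generalized recurrence of the curvature tensors\<close>

lemma SGK_cong:
  assumes "SGK U g T Pi1 Phi1 Psi1 Theta1" "T' = T"
    and "\<And>x i. x \<in> U \<Longrightarrow> Psi1' x i = Psi1 x i" "\<And>x i. x \<in> U \<Longrightarrow> Theta1' x i = Theta1 x i"
  shows "SGK U g T' Pi1 Phi1 Psi1' Theta1'"
  using assms unfolding SGK_def by simp

context semi_riemannian_domain
begin

context
  fixes Pb Fb Pi1 Phi1 Psi1 Theta1 :: "'n form1"
  assumes ricci_recurrent: "ricci_gen_recurrent U g Pb Fb"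
    and Riem_SGK: "SGK U g (Riem g) Pi1 Phi1 Psi1 Theta1"
begin

lemma cov4_Riem:
  "x \<in> U \<Longrightarrow> cov4 g (Riem g) x i a b c d = Pi1 x i * Riem g x a b c d
      + Phi1 x i * kn (Ric g) (Ric g) x a b c d + Psi1 x i * kn g (Ric g) x a b c d
      + Theta1 x i * kn g g x a b c d"
  using Riem_SGK unfolding SGK_def by blast

lemma SGK_Riem_plus_kn:
  "SGK U g (\<lambda>y a b c d. Riem g y a b c d + c1 * kn g (Ric g) y a b c d
      + c2 * scal g y * kn g g y a b c d)
    Pi1 Phi1 (\<lambda>x i. Psi1 x i + c1 * (Pb x i - Pi1 x i))
    (\<lambda>x i. Theta1 x i + c1 * Fb x i
      + c2 * (scal g x * Pb x i + real CARD('n) * Fb x i - scal g x * Pi1 x i))"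
  unfolding SGK_def
proof (intro ballI allI)
  fix x i a b c d
  assume x: "x \<in> U"
  have "cov4 g (\<lambda>y a b c d. Riem g y a b c d + c1 * kn g (Ric g) y a b c d
        + c2 * scal g y * kn g g y a b c d) x i a b c d
    = cov4 g (Riem g) x i a b c d
      + pd i (\<lambda>_. c1) x * kn g (Ric g) x a b c d + c1 * cov4 g (kn g (Ric g)) x i a b c d
      + pd i (\<lambda>y. c2 * scal g y) x * kn g g x a b c d + c2 * scal g x * cov4 g (kn g g) x i a b c d"
    using x
    by (simp add: cov4_add_mult kn_differentiable Riem_differentiable metric_differentiable
        Ric_differentiable scal_differentiable)
  then show "cov4 g (\<lambda>y a b c d. Riem g y a b c d + c1 * kn g (Ric g) y a b c d
        + c2 * scal g y * kn g g y a b c d) x i a b c d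
    = Pi1 x i * (Riem g x a b c d + c1 * kn g (Ric g) x a b c d + c2 * scal g x * kn g g x a b c d)
      + Phi1 x i * kn (Ric g) (Ric g) x a b c d
      + (Psi1 x i + c1 * (Pb x i - Pi1 x i)) * kn g (Ric g) x a b c d
      + (Theta1 x i + c1 * Fb x i
          + c2 * (scal g x * Pb x i + real CARD('n) * Fb x i - scal g x * Pi1 x i)) * kn g g x a b c d"
    using x
    by (simp add: cov4_Riem cov4_kn_metric_Ric[OF ricci_recurrent] cov4_kn_metric_metric pd_const
        pd_cmult scal_differentiable pd_scal_recurrent[OF ricci_recurrent] algebra_simps)
qed

lemma conformal_SGK:
  "SGK U g (conformal g) Pi1 Phi1
     (\<lambda>x i. Psi1 x i - (Pb x i - Pi1 x i) / (real CARD('n) - 2))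
     (\<lambda>x i. Theta1 x i - Fb x i / (real CARD('n) - 2)
        + (scal g x * Pb x i + real CARD('n) * Fb x i - scal g x * Pi1 x i)
          / (2 * (real CARD('n) - 1) * (real CARD('n) - 2)))"
  by (rule SGK_cong[OF SGK_Riem_plus_kn[of "- 1 / (real CARD('n) - 2)"
        "1 / (2 * (real CARD('n) - 1) * (real CARD('n) - 2))"]])
    (simp_all add: fun_eq_iff conformal_def dimr_def)

lemma concircular_SGK:
  "SGK U g (concircular g) Pi1 Phi1 Psi1
     (\<lambda>x i. Theta1 x i
        - (scal g x * Pb x i + real CARD('n) * Fb x i - scal g x * Pi1 x i)
          / (2 * real CARD('n) * (real CARD('n) - 1)))"
  by (rule SGK_cong[OF SGK_Riem_plus_kn[of 0 "- 1 / (2 * real CARD('n) * (real CARD('n) - 1))"]])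
    (simp_all add: fun_eq_iff concircular_def dimr_def)

lemma conharmonic_SGK:
  "SGK U g (conharmonic g) Pi1 Phi1
     (\<lambda>x i. Psi1 x i - (Pb x i - Pi1 x i) / (real CARD('n) - 2))
     (\<lambda>x i. Theta1 x i - Fb x i / (real CARD('n) - 2))"
  by (rule SGK_cong[OF SGK_Riem_plus_kn[of "- 1 / (real CARD('n) - 2)" 0]])
    (simp_all add: fun_eq_iff conharmonic_def dimr_def)

lemma projective_SGK:
  assumes "\<And>x i. x \<in> U \<Longrightarrow> Pi1 x i = Pb x i"
  shows "SGK U g (projective g) Pi1 Phi1 Psi1 (\<lambda>x i. Theta1 x i - Fb x i / (2 * (real CARD('n) - 1)))"
  unfolding SGK_def
proof (intro ballI allI)
  fix x i a b c d
  assume x: "x \<in> U"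
  have "projective g = (\<lambda>y a b c d. Riem g y a b c d
      + - 1 / (real CARD('n) - 1) * half_kn (Ric g) g y a b c d)"
    by (simp add: fun_eq_iff projective_def dimr_def half_kn_def)
  then have cov4_projective: "cov4 g (projective g) x i a b c d = cov4 g (Riem g) x i a b c d
      + pd i (\<lambda>_. - 1 / (real CARD('n) - 1)) x * half_kn (Ric g) g x a b c d
      + - 1 / (real CARD('n) - 1) * cov4 g (half_kn (Ric g) g) x i a b c d"
    using x
    by (simp only:) (intro cov4_add_mult half_kn_differentiable Riem_differentiable
        metric_differentiable Ric_differentiable differentiable_const)
  have projective: "projective g x a b c d
      = Riem g x a b c d - 1 / (real CARD('n) - 1) * half_kn (Ric g) g x a b c d"
    by (simp add: projective_def dimr_def half_kn_def)
  have "Fb x i / (2 * (real CARD('n) - 1)) = 1 / (real CARD('n) - 1) * (Fb x i / 2)"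
    by simp
  then show "cov4 g (projective g) x i a b c d = Pi1 x i * projective g x a b c d
      + Phi1 x i * kn (Ric g) (Ric g) x a b c d + Psi1 x i * kn g (Ric g) x a b c d
      + (Theta1 x i - Fb x i / (2 * (real CARD('n) - 1))) * kn g g x a b c d"
    unfolding cov4_projective projective cov4_Riem[OF x] cov4_half_kn_Ric_metric[OF ricci_recurrent x]
      half_kn_self assms[OF x] pd_const
    by (simp add: algebra_simps)
qed

end

end

theorem theorem3p8:
  fixes U :: "(real^'n::finite) set"
    and g :: "'n tens2"
    and Pb Fb Pi1 Phi1 Psi1 Theta1 :: "'n form1"
  assumes "CARD('n) \<ge> 3"
    and "semi_riemannian U g"
    and "ricci_gen_recurrent U g Pb Fb"
    and "SGK U g (Riem g) Pi1 Phi1 Psi1 Theta1"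
  shows "SGK U g (conformal g) Pi1 Phi1
           (\<lambda>x i. Psi1 x i - (Pb x i - Pi1 x i) / (real CARD('n) - 2))
           (\<lambda>x i. Theta1 x i - Fb x i / (real CARD('n) - 2)
              + (scal g x * Pb x i + real CARD('n) * Fb x i - scal g x * Pi1 x i)
                / (2 * (real CARD('n) - 1) * (real CARD('n) - 2)))
    \<and> SGK U g (concircular g) Pi1 Phi1 Psi1
           (\<lambda>x i. Theta1 x i
              - (scal g x * Pb x i + real CARD('n) * Fb x i - scal g x * Pi1 x i)
                / (2 * real CARD('n) * (real CARD('n) - 1)))
    \<and> SGK U g (conharmonic g) Pi1 Phi1
           (\<lambda>x i. Psi1 x i - (Pb x i - Pi1 x i) / (real CARD('n) - 2))
           (\<lambda>x i. Theta1 x i - Fb x i / (real CARD('n) - 2))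
    \<and> ((\<forall>x\<in>U. \<forall>i. Pi1 x i = Pb x i) \<longrightarrow>
         SGK U g (projective g) Pi1 Phi1 Psi1
           (\<lambda>x i. Theta1 x i - Fb x i / (2 * (real CARD('n) - 1))))"
proof -
  interpret semi_riemannian_domain U g
    by (rule semi_riemannian_domain.intro) (rule assms(2))
  show ?thesis
    using conformal_SGK[OF assms(3,4)] concircular_SGK[OF assms(3,4)]
      conharmonic_SGK[OF assms(3,4)] projective_SGK[OF assms(3,4)]
    by blast
qed

end
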